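(* There is a constant $c$ such that for every locally integrable $u:\mathbb R^d\to\mathbb R$ with $\mathcal E(u,u)<\infty$ and every $M>0$, the truncation $u^M(x)=a(x/M)u(x)$ satisfies $\mathcal E(u^M,u^M)<\infty$ and $$\mathcal E(u^M,u^M)\le c\,\mathcal E(u,u)+\frac{c}{M^{d+\alpha}}\Big(\int_{B(2M)}u(x)dx\Big)^2.$$
   Context: $d\ge1$, $\alpha\in(0,2)$, $h:\mathbb R^d\setminus\{0\}\to(0,\infty)$ continuous, even, homogeneous of degree $-(d+\alpha)$; $\mathcal E(v,v)=\frac12\iint h(y-x)(v(y)-v(x))^2dxdy$. $|x|=\max_i|x_i|$, $B(R)=\{x:|x|\le R\}$. $a(x)=1$ if $|x|\le1$, $a(x)=2-|x|$ if $1\le|x|\le2$, $a(x)=0$ if $|x|\ge2$. *)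

theory Defs
  imports "HOL-Analysis.Analysis"
begin

text \<open>Max norm |x| = max_i |x_i| on R^d (index type 'n, d = CARD('n)).\<close>
definition maxnorm :: "real^'n \<Rightarrow> real" where
  "maxnorm x = Max (range (\<lambda>i. \<bar>x $ i\<bar>))"

definition cube :: "real \<Rightarrow> (real^'n) set" where
  "cube R = {x. maxnorm x \<le> R}"

definition cutoff :: "real^'n \<Rightarrow> real" where
  "cutoff x = (if maxnorm x \<le> 1 then 1 else if maxnorm x \<le> 2 then 2 - maxnorm x else 0)"

definition locally_integrable :: "(real^'n \<Rightarrow> real) \<Rightarrow> bool" where
  "locally_integrable u \<longleftrightarrow> (\<forall>K. compact K \<longrightarrow> set_integrable lborel K u)"

definition energy :: "(real^'n \<Rightarrow> real) \<Rightarrow> (real^'n \<Rightarrow> real) \<Rightarrow> ennreal" where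
  "energy h v = ennreal (1/2) *
     (\<integral>\<^sup>+ y. (\<integral>\<^sup>+ x. ennreal (h (y - x) * (v y - v x)^2) \<partial>lborel) \<partial>lborel)"

end

theory Submission
  imports Defs
begin

(* The truncation estimate for the nonlocal energy
     E(v) = 1/2 \<integral>\<integral> h(y - x) (v y - v x)^2 dx dy,
   h positive, even, continuous off 0 and homogeneous of degree -(d + \<alpha>), 0 < \<alpha> < 2.
   Write a(x) = cutoff(x/M), B = cube(2M), \<mu> = |B| = (4M)^d and S = \<integral>_B u.

   (1) Product rule.  Pointwise (a y u y - a x u x)^2 \<le> 2 (u y - u x)^2
       + 2 (a y - a x)^2 (1_B(x) u(x)^2 + 1_B(y) u(y)^2), since a is [0,1]-valued and
       supported in B.  Integrating, E(a u) \<le> 2 E(u) + 2 \<Lambda> \<integral>_B u^2, where \<Lambda> bounds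
       \<integral> h(p - x) (a p - a x)^2 dx uniformly in p.
   (2) Kernel bound.  a is (1/M)-Lipschitz for the max norm and [0,1]-valued, so by
       homogeneity \<Lambda> = M^-\<alpha> K with K = \<integral> h(w) min(1,|w|)^2 dw, which is finite:
       sum the scaling law \<integral>_{a\<le>|w|\<le>2a} h = a^-\<alpha> \<integral>_{1\<le>|w|\<le>2} h over dyadic shells.
   (3) Poincare inequality on B.  By Cauchy-Schwarz, \<integral>_B u^2 \<le> (2/\<mu>) \<integral>_B\<integral>_B (u y - u x)^2
       + 2 S^2/\<mu>, and h \<ge> const M^-(d+\<alpha>) on B - B, so \<integral>_B u^2 \<le> C M^\<alpha> E(u) + 2 S^2/\<mu>.
   Combining (1)-(3) gives the theorem with c = 2 + 2 K C + 4 K. *)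

subsection \<open>The max norm\<close>

lemma maxnorm_ge: "\<bar>x $ i\<bar> \<le> maxnorm x"
  unfolding maxnorm_def by (rule Max_ge) auto

lemma maxnorm_le_iff: "maxnorm x \<le> R \<longleftrightarrow> (\<forall>i. \<bar>x $ i\<bar> \<le> R)"
  unfolding maxnorm_def by (subst Max_le_iff) auto

lemma maxnorm_attained: "\<exists>i. maxnorm x = \<bar>x $ i\<bar>"
proof -
  have "maxnorm x \<in> range (\<lambda>i. \<bar>x $ i\<bar>)" unfolding maxnorm_def by (rule Max_in) auto
  then show ?thesis by auto
qed

lemma maxnorm_nonneg: "0 \<le> maxnorm x"
  using maxnorm_ge[of x] abs_ge_zero order_trans by blast

lemma maxnorm_eq_0: "maxnorm x = 0 \<longleftrightarrow> x = 0"
  using maxnorm_le_iff[of x 0] maxnorm_nonneg[of x] by (auto simp: vec_eq_iff)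

lemma maxnorm_zero[simp]: "maxnorm 0 = 0"
  using maxnorm_eq_0 by blast

lemma maxnorm_pos: "x \<noteq> 0 \<Longrightarrow> 0 < maxnorm x"
  using maxnorm_nonneg[of x] maxnorm_eq_0[of x] by linarith

lemma maxnorm_scale: "maxnorm (c *\<^sub>R x) = \<bar>c\<bar> * maxnorm x"
proof -
  obtain i where i: "maxnorm (c *\<^sub>R x) = \<bar>(c *\<^sub>R x) $ i\<bar>" using maxnorm_attained by blast
  obtain j where j: "maxnorm x = \<bar>x $ j\<bar>" using maxnorm_attained by blast
  have "maxnorm (c *\<^sub>R x) \<le> \<bar>c\<bar> * maxnorm x"
    using i maxnorm_ge[of x i] by (simp add: abs_mult mult_left_mono)
  moreover have "\<bar>c\<bar> * maxnorm x \<le> maxnorm (c *\<^sub>R x)"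
    using j maxnorm_ge[of "c *\<^sub>R x" j] by (simp add: abs_mult)
  ultimately show ?thesis by linarith
qed

lemma maxnorm_minus: "maxnorm (- x) = maxnorm x"
  using maxnorm_scale[of "-1" x] by simp

lemma maxnorm_triangle: "maxnorm (x + y) \<le> maxnorm x + maxnorm y"
proof -
  obtain i where "maxnorm (x + y) = \<bar>(x + y) $ i\<bar>" using maxnorm_attained by blast
  then show ?thesis using maxnorm_ge[of x i] maxnorm_ge[of y i] by simp
qed

lemma maxnorm_diff: "\<bar>maxnorm x - maxnorm y\<bar> \<le> maxnorm (x - y)"
  using maxnorm_triangle[of "x - y" y] maxnorm_triangle[of "y - x" x] maxnorm_minus[of "x - y"]
  by (simp add: abs_le_iff)

lemma continuous_maxnorm: "continuous_on S maxnorm"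
proof -
  have "maxnorm x \<le> norm x" for x :: "real^'n"
    using maxnorm_attained[of x] component_le_norm_cart by metis
  then have "lipschitz_on 1 UNIV maxnorm"
    unfolding lipschitz_on_def dist_real_def dist_norm
    using maxnorm_diff order_trans by fastforce
  then show ?thesis using lipschitz_on_continuous_on continuous_on_subset by blast
qed

lemma maxnorm_measurable[measurable]: "maxnorm \<in> borel_measurable borel"
  by (rule borel_measurable_continuous_onI) (rule continuous_maxnorm)

lemma cube_cbox: "cube R = cbox (- (\<chi> i. R)) (\<chi> i. R)"
  unfolding cube_def by (auto simp: mem_box_cart maxnorm_le_iff abs_le_iff; smt (verit))

lemma compact_maxnorm_annulus: "compact {w::real^'n. r \<le> maxnorm w \<and> maxnorm w \<le> R}"
proof -
  have "{w::real^'n. r \<le> maxnorm w \<and> maxnorm w \<le> R} = cube R \<inter> maxnorm -` {r..}"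
    by (auto simp: cube_def)
  moreover have "closed (maxnorm -` {r..} :: (real^'n) set)"
    using continuous_maxnorm by (intro continuous_closed_vimage) (auto simp: continuous_on_eq_continuous_within)
  ultimately show ?thesis by (simp add: cube_cbox compact_Int_closed)
qed

lemma cube_sets[measurable]: "cube R \<in> sets borel"
  unfolding cube_cbox by simp

lemma emeasure_cube:
  assumes "0 \<le> R"
  shows "emeasure lborel (cube R :: (real^'n) set) = ennreal ((2 * R) ^ CARD('n))"
proof -
  have "\<forall>b\<in>Basis. (- (\<chi> i. R)) \<bullet> b \<le> (\<chi> i. R) \<bullet> (b :: real^'n)"
    using assms by (auto simp: Basis_vec_def inner_axis)
  moreover have "(\<Prod>b\<in>Basis. ((\<chi> i. R) - (- (\<chi> i. R))) \<bullet> (b::real^'n)) = (\<Prod>b\<in>(Basis::(real^'n) set). 2*R)"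
    by (rule prod.cong) (auto simp: Basis_vec_def inner_axis)
  ultimately show ?thesis unfolding cube_cbox using assms
    by (simp add: emeasure_lborel_cbox_eq)
qed

lemma cube_diameter: "x \<in> cube R \<Longrightarrow> y \<in> cube R \<Longrightarrow> maxnorm (y - x) \<le> 2 * R"
  using maxnorm_triangle[of y "- x"] maxnorm_minus[of x] by (simp add: cube_def)

lemma cutoff_measurable[measurable]: "cutoff \<in> borel_measurable borel"
  unfolding cutoff_def by measurable

lemma cutoff_bounds: "0 \<le> cutoff x" "cutoff x \<le> 1"
  unfolding cutoff_def by auto

lemma cutoff_lipschitz: "\<bar>cutoff x - cutoff y\<bar> \<le> min 1 (maxnorm (x - y))"
proof -
  have "\<bar>cutoff x - cutoff y\<bar> \<le> \<bar>maxnorm x - maxnorm y\<bar>"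
    unfolding cutoff_def by auto
  then have "\<bar>cutoff x - cutoff y\<bar> \<le> maxnorm (x - y)" using maxnorm_diff order_trans by blast
  moreover have "\<bar>cutoff x - cutoff y\<bar> \<le> 1" using cutoff_bounds[of x] cutoff_bounds[of y] by auto
  ultimately show ?thesis by simp
qed

lemma scaled_cutoff_support:
  assumes "0 < M" "0 < cutoff ((1/M) *\<^sub>R x)"
  shows "x \<in> cube (2 * M)"
proof -
  have "maxnorm ((1/M) *\<^sub>R x) \<le> 2"
    using assms(2) unfolding cutoff_def by (auto split: if_splits)
  then show ?thesis using assms(1) by (simp add: cube_def maxnorm_scale field_simps)
qed

lemma nn_integral_scale:
  fixes f :: "real^'n \<Rightarrow> ennreal"
  assumes [measurable]: "f \<in> borel_measurable borel" and c: "0 < c"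
  shows "(\<integral>\<^sup>+x. f x \<partial>lborel) = ennreal (c ^ CARD('n)) * (\<integral>\<^sup>+x. f (c *\<^sub>R x) \<partial>lborel)"
proof -
  have "(\<integral>\<^sup>+x. f x \<partial>lborel)
      = (\<integral>\<^sup>+x. f x \<partial>(density (distr lborel borel (\<lambda>x. 0 + c *\<^sub>R x)) (\<lambda>_. \<bar>c\<bar>^DIM(real^'n))))"
    using lborel_affine[of c "0::real^'n"] c by simp
  also have "\<dots> = ennreal (c ^ CARD('n)) * (\<integral>\<^sup>+x. f (c *\<^sub>R x) \<partial>lborel)"
    using c by (simp add: nn_integral_density nn_integral_distr nn_integral_cmult)
  finally show ?thesis .
qed

lemma nn_integral_shift:
  fixes f :: "real^'n \<Rightarrow> ennreal"
  assumes [measurable]: "f \<in> borel_measurable borel"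
  shows "(\<integral>\<^sup>+x. f x \<partial>lborel) = (\<integral>\<^sup>+x. f (t + x) \<partial>lborel)"
proof -
  have "(\<integral>\<^sup>+x. f x \<partial>lborel) = (\<integral>\<^sup>+x. f x \<partial>(distr lborel borel ((+) t)))"
    by (simp add: lborel_distr_plus)
  also have "\<dots> = (\<integral>\<^sup>+x. f (t + x) \<partial>lborel)"
    by (simp add: nn_integral_distr)
  finally show ?thesis .
qed

text \<open>Locally integrable functions are Borel measurable: they are pointwise limits
  of their (integrable) restrictions to the cubes of integer radius.\<close>
lemma locally_integrable_measurable:
  fixes u :: "real^'n \<Rightarrow> real"
  assumes "locally_integrable u"
  shows "u \<in> borel_measurable borel"
proof (rule borel_measurable_LIMSEQ_real)
  show "(\<lambda>n. indicator (cube (real n)) x * u x) \<longlonglongrightarrow> u x" for x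
  proof (rule tendsto_eventually)
    obtain N :: nat where "maxnorm x \<le> N" using real_arch_simple by blast
    then show "\<forall>\<^sub>F n in sequentially. indicator (cube (real n)) x * u x = u x"
      unfolding eventually_sequentially
      by (intro exI[of _ N]) (auto simp: cube_def indicator_def)
  qed
  show "(\<lambda>x. indicator (cube (real n)) x * u x) \<in> borel_measurable borel" for n
  proof -
    have "set_integrable lborel (cube (real n)) u"
      using assms unfolding locally_integrable_def by (simp add: cube_cbox)
    then show ?thesis unfolding set_integrable_def by (simp add: borel_measurable_integrable)
  qed
qed

subsection \<open>Elementary inequalities\<close>

lemma square_sum_le: "(p + q)\<^sup>2 \<le> 2 * p\<^sup>2 + 2 * (q::real)\<^sup>2"
proof -
  have "0 \<le> (p - q)\<^sup>2" by simp
  then show ?thesis by (simp add: power2_eq_square algebra_simps)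
qed

lemma product_difference_square:
  fixes ax ay ux uy ix iy :: real
  assumes "0 \<le> ax" "ax \<le> 1" "0 \<le> ay" "ay \<le> 1" "0 \<le> ix" "0 \<le> iy"
    and "0 < ax \<Longrightarrow> ix = 1" "0 < ay \<Longrightarrow> iy = 1"
  shows "(ay*uy - ax*ux)\<^sup>2 \<le> 2*(uy - ux)\<^sup>2 + 2*(ay - ax)\<^sup>2 * (ix*ux\<^sup>2 + iy*uy\<^sup>2)"
proof -
  \<comment> \<open>the case where the first weight is the smaller one; the other follows by symmetry\<close>
  have ordered: "(s*p - t*q)\<^sup>2 \<le> 2*(p - q)\<^sup>2 + 2*(s - t)\<^sup>2 * (b*q\<^sup>2)"
    if "0 \<le> s" "s \<le> 1" "s \<le> t" "s < t \<Longrightarrow> b = 1" for s t p q b :: real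
  proof -
    have "(s*p - t*q)\<^sup>2 = (s*(p - q) + q*(s - t))\<^sup>2" by (simp add: algebra_simps)
    also have "\<dots> \<le> 2*(s*(p - q))\<^sup>2 + 2*(q*(s - t))\<^sup>2" by (rule square_sum_le)
    also have "(s*(p - q))\<^sup>2 \<le> (p - q)\<^sup>2"
      using that by (simp add: power_mult_distrib mult_left_le_one_le power_le_one)
    also have "(q*(s - t))\<^sup>2 = (s - t)\<^sup>2 * (b*q\<^sup>2)"
      using that by (cases "s = t") (auto simp: power_mult_distrib)
    finally show ?thesis by simp
  qed
  have extra: "0 \<le> 2*(ay - ax)\<^sup>2 * (iy*uy\<^sup>2)" "0 \<le> 2*(ay - ax)\<^sup>2 * (ix*ux\<^sup>2)"
    using assms by simp_all
  show ?thesis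
  proof (cases "ay \<le> ax")
    case True
    then have "(ay*uy - ax*ux)\<^sup>2 \<le> 2*(uy - ux)\<^sup>2 + 2*(ay - ax)\<^sup>2 * (ix*ux\<^sup>2)"
      using ordered[of ay ax ix uy ux] assms by simp
    then show ?thesis using extra(1) unfolding distrib_left by linarith
  next
    case False
    then have "(ax*ux - ay*uy)\<^sup>2 \<le> 2*(ux - uy)\<^sup>2 + 2*(ax - ay)\<^sup>2 * (iy*uy\<^sup>2)"
      using ordered[of ax ay iy ux uy] assms by simp
    then have "(ay*uy - ax*ux)\<^sup>2 \<le> 2*(uy - ux)\<^sup>2 + 2*(ay - ax)\<^sup>2 * (iy*uy\<^sup>2)"
      by (simp add: power2_commute)
    then show ?thesis using extra(2) unfolding distrib_left by linarith
  qed
qed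

text \<open>The square of the mean is dominated by the mean of the square (Cauchy-Schwarz on a
  set A of finite measure \<mu>), stated without any square integrability assumption.\<close>
lemma squared_integral_le:
  fixes f :: "'a \<Rightarrow> real"
  assumes A: "A \<in> sets M" "emeasure M A = ennreal \<mu>" "0 < \<mu>"
    and f: "set_integrable M A f"
  shows "ennreal ((set_lebesgue_integral M A f)\<^sup>2 / \<mu>) \<le> (\<integral>\<^sup>+x. indicator A x * ennreal ((f x)\<^sup>2) \<partial>M)"
proof -
  define s where "s = set_lebesgue_integral M A f"
  define c where "c = s / \<mu>"
  \<comment> \<open>the tangent line 2 c f - c^2 of f^2 at the mean c has integral s^2/\<mu>\<close>
  define g where "g x = indicator A x * (2 * c * f x - c\<^sup>2)" for x
  have i1: "integrable M (\<lambda>x. indicator A x * f x)" using f unfolding set_integrable_def by simp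
  have i2: "integrable M (\<lambda>x. indicator A x :: real)"
    using A by (intro integrable_real_indicator) auto
  have g_eq: "g = (\<lambda>x. 2 * c * (indicator A x * f x) - c\<^sup>2 * indicator A x)"
    unfolding g_def by (auto simp: algebra_simps)
  have ig: "integrable M g" unfolding g_eq using i1 i2 by auto
  have "integral\<^sup>L M g = 2 * c * s - c\<^sup>2 * \<mu>"
    unfolding g_eq s_def set_lebesgue_integral_def using i1 i2 A by (simp add: measure_def)
  also have "\<dots> = s\<^sup>2 / \<mu>" unfolding c_def using A by (simp add: power2_eq_square field_simps)
  finally have "integral\<^sup>L M g = s\<^sup>2 / \<mu>" .
  moreover have "g x \<le> max (g x) 0" for x by simp
  then have "integral\<^sup>L M g \<le> integral\<^sup>L M (\<lambda>x. max (g x) 0)"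
    using ig by (intro integral_mono) auto
  moreover have "ennreal (integral\<^sup>L M (\<lambda>x. max (g x) 0)) = (\<integral>\<^sup>+x. ennreal (max (g x) 0) \<partial>M)"
    using ig by (subst nn_integral_eq_integral) auto
  moreover have "(\<integral>\<^sup>+x. ennreal (max (g x) 0) \<partial>M) = (\<integral>\<^sup>+x. ennreal (g x) \<partial>M)"
    by (intro nn_integral_cong) (auto simp: max_def ennreal_neg)
  moreover have "ennreal (g x) \<le> indicator A x * ennreal ((f x)\<^sup>2)" for x
  proof -
    have "2 * c * f x - c\<^sup>2 \<le> (f x)\<^sup>2" using square_sum_le[of "f x - c" 0]
      by (simp add: power2_eq_square algebra_simps)
    then show ?thesis by (cases "x \<in> A") (auto simp: g_def)
  qed
  then have "(\<integral>\<^sup>+x. ennreal (g x) \<partial>M) \<le> (\<integral>\<^sup>+x. indicator A x * ennreal ((f x)\<^sup>2) \<partial>M)"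
    by (rule nn_integral_mono)
  ultimately show ?thesis unfolding s_def by (metis ennreal_leI order_trans)
qed

text \<open>For a constant c, c^2 is controlled by the mean of (c - u)^2 on A and the mean of u
  on A: this is Cauchy-Schwarz applied to c - u.\<close>
lemma square_le_mean_oscillation:
  fixes u :: "'a \<Rightarrow> real"
  assumes A: "A \<in> sets M" and \<mu>: "emeasure M A = ennreal \<mu>" "0 < \<mu>" and u: "set_integrable M A u"
  defines "S \<equiv> set_lebesgue_integral M A u"
  shows "ennreal (c\<^sup>2) \<le> ennreal (2/\<mu>) * (\<integral>\<^sup>+x. indicator A x * ennreal ((c - u x)\<^sup>2) \<partial>M)
    + ennreal (2 * S\<^sup>2 / \<mu>\<^sup>2)"
proof -
  have const: "set_integrable M A (\<lambda>_. c)"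
    using A \<mu> unfolding set_integrable_def by (intro integrable_scaleR_left integrable_real_indicator) auto
  have "set_lebesgue_integral M A (\<lambda>x. c - u x) = c * \<mu> - S"
    using set_integral_diff(2)[OF const u] set_integral_const[of A M c] A \<mu>
    by (simp add: S_def measure_def)
  moreover have "ennreal ((set_lebesgue_integral M A (\<lambda>x. c - u x))\<^sup>2 / \<mu>)
      \<le> (\<integral>\<^sup>+x. indicator A x * ennreal ((c - u x)\<^sup>2) \<partial>M)"
    using squared_integral_le[OF A \<mu> set_integral_diff(1)[OF const u]] by simp
  ultimately have cs: "ennreal ((c * \<mu> - S)\<^sup>2 / \<mu>) \<le> (\<integral>\<^sup>+x. indicator A x * ennreal ((c - u x)\<^sup>2) \<partial>M)"
    by simp
  have "c\<^sup>2 \<le> 2*((c * \<mu> - S)/\<mu>)\<^sup>2 + 2*(S/\<mu>)\<^sup>2"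
    using square_sum_le[of "(c * \<mu> - S)/\<mu>" "S/\<mu>"] \<mu> by (simp add: field_simps)
  also have "\<dots> = 2/\<mu> * ((c * \<mu> - S)\<^sup>2 / \<mu>) + 2 * S\<^sup>2 / \<mu>\<^sup>2"
    using \<mu> by (simp add: power2_eq_square field_simps)
  finally have "ennreal (c\<^sup>2) \<le> ennreal (2/\<mu> * ((c * \<mu> - S)\<^sup>2 / \<mu>) + 2 * S\<^sup>2 / \<mu>\<^sup>2)"
    by (rule ennreal_leI)
  also have "\<dots> = ennreal (2/\<mu>) * ennreal ((c * \<mu> - S)\<^sup>2 / \<mu>) + ennreal (2 * S\<^sup>2 / \<mu>\<^sup>2)"
    using \<mu> by (simp add: ennreal_plus ennreal_mult del: times_divide_eq_left times_divide_eq_right)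
  also have "\<dots> \<le> ennreal (2/\<mu>) * (\<integral>\<^sup>+x. indicator A x * ennreal ((c - u x)\<^sup>2) \<partial>M) + ennreal (2 * S\<^sup>2 / \<mu>\<^sup>2)"
    using cs by (intro add_mono mult_left_mono) auto
  finally show ?thesis .
qed

lemma poincare_with_mean:
  fixes u :: "'a::euclidean_space \<Rightarrow> real"
  assumes A[measurable]: "A \<in> sets borel" and \<mu>: "emeasure lborel A = ennreal \<mu>" "0 < \<mu>"
    and u: "set_integrable lborel A u" and [measurable]: "u \<in> borel_measurable borel"
  defines "S \<equiv> set_lebesgue_integral lborel A u"
  shows "(\<integral>\<^sup>+y. indicator A y * ennreal ((u y)\<^sup>2) \<partial>lborel)
      \<le> ennreal (2/\<mu>) * (\<integral>\<^sup>+y. \<integral>\<^sup>+x. indicator A y * (indicator A x * ennreal ((u y - u x)\<^sup>2)) \<partial>lborel \<partial>lborel)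
        + ennreal (2 * S\<^sup>2 / \<mu>)"
proof -
  define Q where "Q y = (\<integral>\<^sup>+x. indicator A x * ennreal ((u y - u x)\<^sup>2) \<partial>lborel)" for y
  have [measurable]: "Q \<in> borel_measurable borel"
    unfolding Q_def by (rule lborel.borel_measurable_nn_integral[simplified]) (simp add: case_prod_beta)
  have "(\<integral>\<^sup>+y. indicator A y * ennreal ((u y)\<^sup>2) \<partial>lborel)
      \<le> (\<integral>\<^sup>+y. ennreal (2/\<mu>) * (indicator A y * Q y) + ennreal (2 * S\<^sup>2 / \<mu>\<^sup>2) * indicator A y \<partial>lborel)"
    using square_le_mean_oscillation[OF _ \<mu> u] unfolding Q_def S_def
    by (intro nn_integral_mono) (auto simp: indicator_def)
  also have "\<dots> = ennreal (2/\<mu>) * (\<integral>\<^sup>+y. indicator A y * Q y \<partial>lborel) + ennreal (2 * S\<^sup>2 / \<mu>\<^sup>2) * emeasure lborel A"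
    by (subst nn_integral_add) (auto simp: nn_integral_cmult nn_integral_cmult_indicator)
  also have "ennreal (2 * S\<^sup>2 / \<mu>\<^sup>2) * emeasure lborel A = ennreal (2 * S\<^sup>2 / \<mu>)"
    using \<mu> by (simp add: ennreal_mult[symmetric] power2_eq_square)
  also have "(\<integral>\<^sup>+y. indicator A y * Q y \<partial>lborel)
      = (\<integral>\<^sup>+y. \<integral>\<^sup>+x. indicator A y * (indicator A x * ennreal ((u y - u x)\<^sup>2)) \<partial>lborel \<partial>lborel)"
    unfolding Q_def by (intro nn_integral_cong nn_integral_cmult[symmetric]) measurable
  finally show ?thesis .
qed

lemma oscillation_le_energy:
  fixes h u :: "real^'n \<Rightarrow> real"
  assumes [measurable]: "h \<in> borel_measurable borel" "u \<in> borel_measurable borel" "A \<in> sets borel"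
    and \<eta>: "0 < \<eta>" "\<And>x y. x \<in> A \<Longrightarrow> y \<in> A \<Longrightarrow> x \<noteq> y \<Longrightarrow> \<eta> \<le> h (y - x)"
  shows "(\<integral>\<^sup>+y. \<integral>\<^sup>+x. indicator A y * (indicator A x * ennreal ((u y - u x)\<^sup>2)) \<partial>lborel \<partial>lborel)
    \<le> ennreal (2/\<eta>) * energy h u"
proof -
  define D where "D y x = ennreal (h (y - x) * (u y - u x)\<^sup>2)" for y x :: "real^'n"
  have [measurable]: "(\<lambda>(y, x). D y x) \<in> borel_measurable (lborel \<Otimes>\<^sub>M lborel)"
    unfolding D_def case_prod_beta by measurable
  have pointwise: "indicator A y * (indicator A x * ennreal ((u y - u x)\<^sup>2)) \<le> ennreal (1/\<eta>) * D y x" for x y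
  proof (cases "x \<in> A \<and> y \<in> A \<and> x \<noteq> y")
    case True
    then have "(u y - u x)\<^sup>2 \<le> 1/\<eta> * (h (y - x) * (u y - u x)\<^sup>2)"
      using \<eta> mult_right_mono[OF \<eta>(2), of x y "(u y - u x)\<^sup>2"] by (simp add: field_simps)
    then have "ennreal ((u y - u x)\<^sup>2) \<le> ennreal (1/\<eta> * (h (y - x) * (u y - u x)\<^sup>2))"
      by (rule ennreal_leI)
    also have "\<dots> = ennreal (1/\<eta>) * D y x"
      unfolding D_def using \<eta> True order_trans[OF less_imp_le[OF \<eta>(1)] \<eta>(2)]
      by (intro ennreal_mult) auto
    finally show ?thesis using True by simp
  qed (auto simp: indicator_def)
  have "(\<integral>\<^sup>+y. \<integral>\<^sup>+x. indicator A y * (indicator A x * ennreal ((u y - u x)\<^sup>2)) \<partial>lborel \<partial>lborel)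
      \<le> (\<integral>\<^sup>+y. \<integral>\<^sup>+x. ennreal (1/\<eta>) * D y x \<partial>lborel \<partial>lborel)"
    using pointwise by (intro nn_integral_mono) auto
  also have "\<dots> = ennreal (1/\<eta>) * (\<integral>\<^sup>+y. \<integral>\<^sup>+x. D y x \<partial>lborel \<partial>lborel)"
    by (simp add: nn_integral_cmult)
  also have "ennreal (1/\<eta>) = ennreal (2/\<eta>) * ennreal (1/2)"
    using \<eta> by (subst ennreal_mult[symmetric]) auto
  finally show ?thesis unfolding energy_def D_def mult.assoc .
qed

lemma iterated_nn_integral_add:
  fixes F G :: "'a::euclidean_space \<Rightarrow> 'b::euclidean_space \<Rightarrow> ennreal"
  assumes [measurable]: "(\<lambda>(y, x). F y x) \<in> borel_measurable (lborel \<Otimes>\<^sub>M lborel)"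
    "(\<lambda>(y, x). G y x) \<in> borel_measurable (lborel \<Otimes>\<^sub>M lborel)"
  shows "(\<integral>\<^sup>+y. \<integral>\<^sup>+x. F y x + G y x \<partial>lborel \<partial>lborel)
    = (\<integral>\<^sup>+y. \<integral>\<^sup>+x. F y x \<partial>lborel \<partial>lborel) + (\<integral>\<^sup>+y. \<integral>\<^sup>+x. G y x \<partial>lborel \<partial>lborel)"
proof -
  have "(\<integral>\<^sup>+x. F y x + G y x \<partial>lborel) = (\<integral>\<^sup>+x. F y x \<partial>lborel) + (\<integral>\<^sup>+x. G y x \<partial>lborel)" for y
    by (rule nn_integral_add) measurable
  then show ?thesis
    by (simp add: nn_integral_add lborel.borel_measurable_nn_integral)
qed

lemma iterated_nn_integral_cmult:
  fixes F :: "'a::euclidean_space \<Rightarrow> 'b::euclidean_space \<Rightarrow> ennreal"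
  assumes [measurable]: "(\<lambda>(y, x). F y x) \<in> borel_measurable (lborel \<Otimes>\<^sub>M lborel)"
  shows "(\<integral>\<^sup>+y. \<integral>\<^sup>+x. c * F y x \<partial>lborel \<partial>lborel) = c * (\<integral>\<^sup>+y. \<integral>\<^sup>+x. F y x \<partial>lborel \<partial>lborel)"
proof -
  have "(\<integral>\<^sup>+x. c * F y x \<partial>lborel) = c * (\<integral>\<^sup>+x. F y x \<partial>lborel)" for y
    by (rule nn_integral_cmult) measurable
  then show ?thesis
    by (simp add: nn_integral_cmult lborel.borel_measurable_nn_integral)
qed

lemma nn_integral_kernel_weight_le:
  fixes k :: "'a \<Rightarrow> 'b \<Rightarrow> ennreal"
  assumes "\<And>y. k y \<in> borel_measurable N" "g \<in> borel_measurable M"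
    and "\<And>y. (\<integral>\<^sup>+x. k y x \<partial>N) \<le> \<Lambda>"
  shows "(\<integral>\<^sup>+y. \<integral>\<^sup>+x. k y x * g y \<partial>N \<partial>M) \<le> \<Lambda> * (\<integral>\<^sup>+y. g y \<partial>M)"
proof -
  have "(\<integral>\<^sup>+y. \<integral>\<^sup>+x. k y x * g y \<partial>N \<partial>M) = (\<integral>\<^sup>+y. (\<integral>\<^sup>+x. k y x \<partial>N) * g y \<partial>M)"
    using assms(1) by (simp add: nn_integral_multc)
  also have "\<dots> \<le> (\<integral>\<^sup>+y. \<Lambda> * g y \<partial>M)"
    using assms(3) by (intro nn_integral_mono mult_right_mono) auto
  also have "\<dots> = \<Lambda> * (\<integral>\<^sup>+y. g y \<partial>M)"
    using assms(2) by (rule nn_integral_cmult)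
  finally show ?thesis .
qed

lemma ennreal_half_double: "ennreal (1/2) * (2 * z) = z"
proof -
  have "ennreal (1/2) * 2 = ennreal (1/2 * 2)" by (simp only: ennreal_mult ennreal_numeral[symmetric])
  then show ?thesis by (simp add: mult.assoc[symmetric])
qed

lemma energy_integrand_product_le:
  fixes h a u :: "real^'n \<Rightarrow> real"
  assumes h_nonneg: "\<And>z. z \<noteq> 0 \<Longrightarrow> 0 \<le> h z"
    and a: "\<And>x. 0 \<le> a x" "\<And>x. a x \<le> 1" "\<And>x. 0 < a x \<Longrightarrow> x \<in> B"
  shows "ennreal (h (y - x) * (a y * u y - a x * u x)\<^sup>2)
    \<le> 2 * (ennreal (h (y - x) * (u y - u x)\<^sup>2)
      + (ennreal (h (y - x) * (a y - a x)\<^sup>2) * (indicator B x * ennreal ((u x)\<^sup>2))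
       + ennreal (h (y - x) * (a y - a x)\<^sup>2) * (indicator B y * ennreal ((u y)\<^sup>2))))"
proof (cases "y = x")
  case False
  have hnn: "0 \<le> h (y - x)" using False h_nonneg by simp
  have "(a y * u y - a x * u x)\<^sup>2 \<le> 2*(u y - u x)\<^sup>2
      + 2*(a y - a x)\<^sup>2 * (indicator B x * (u x)\<^sup>2 + indicator B y * (u y)\<^sup>2)"
    by (rule product_difference_square) (auto simp: a indicator_def)
  then have "h (y - x) * (a y * u y - a x * u x)\<^sup>2 \<le> h (y - x) * (2*(u y - u x)\<^sup>2
      + 2*(a y - a x)\<^sup>2 * (indicator B x * (u x)\<^sup>2 + indicator B y * (u y)\<^sup>2))"
    by (rule mult_left_mono[OF _ hnn])
  also have "\<dots> = 2 * (h (y - x) * (u y - u x)\<^sup>2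
      + (h (y - x) * (a y - a x)\<^sup>2 * (indicator B x * (u x)\<^sup>2)
       + h (y - x) * (a y - a x)\<^sup>2 * (indicator B y * (u y)\<^sup>2)))"
    by (simp add: algebra_simps)
  finally have "ennreal (h (y - x) * (a y * u y - a x * u x)\<^sup>2) \<le> ennreal (\<dots>)"
    by (rule ennreal_leI)
  also have "ennreal (indicator B z * (u z)\<^sup>2) = indicator B z * ennreal ((u z)\<^sup>2)" for z
    by (simp add: indicator_def)
  then have "ennreal (2 * (h (y - x) * (u y - u x)\<^sup>2
      + (h (y - x) * (a y - a x)\<^sup>2 * (indicator B x * (u x)\<^sup>2)
       + h (y - x) * (a y - a x)\<^sup>2 * (indicator B y * (u y)\<^sup>2))))
    = 2 * (ennreal (h (y - x) * (u y - u x)\<^sup>2)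
      + (ennreal (h (y - x) * (a y - a x)\<^sup>2) * (indicator B x * ennreal ((u x)\<^sup>2))
       + ennreal (h (y - x) * (a y - a x)\<^sup>2) * (indicator B y * ennreal ((u y)\<^sup>2))))"
    using hnn by (simp add: ennreal_plus ennreal_mult)
  finally show ?thesis .
qed simp

text \<open>The cross terms of the product rule: a weight g integrated against the kernel
  h(y - x) (a y - a x)^2, whose sections have mass at most \<Lambda> (in either variable, h being
  even), in either of the two variables.\<close>
lemma kernel_cross_terms_le:
  fixes h a :: "real^'n \<Rightarrow> real" and g :: "real^'n \<Rightarrow> ennreal"
  assumes [measurable]: "h \<in> borel_measurable borel" "a \<in> borel_measurable borel" "g \<in> borel_measurable borel"
    and h_even: "\<And>z. z \<noteq> 0 \<Longrightarrow> h (- z) = h z"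
    and \<Lambda>: "\<And>p. (\<integral>\<^sup>+q. ennreal (h (q - p) * (a q - a p)\<^sup>2) \<partial>lborel) \<le> \<Lambda>"
  defines "k \<equiv> \<lambda>y x. ennreal (h (y - x) * (a y - a x)\<^sup>2)"
  shows "(\<integral>\<^sup>+y. \<integral>\<^sup>+x. k y x * g x \<partial>lborel \<partial>lborel) \<le> \<Lambda> * (\<integral>\<^sup>+x. g x \<partial>lborel)"
    and "(\<integral>\<^sup>+y. \<integral>\<^sup>+x. k y x * g y \<partial>lborel \<partial>lborel) \<le> \<Lambda> * (\<integral>\<^sup>+x. g x \<partial>lborel)"
proof -
  have m_kernel: "(\<lambda>(y, x). k y x) \<in> borel_measurable (lborel \<Otimes>\<^sub>M lborel)"
    unfolding k_def case_prod_beta by measurable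
  have m_swap: "(\<lambda>(x, y). k y x * g x) \<in> borel_measurable (lborel \<Otimes>\<^sub>M lborel)"
    unfolding k_def case_prod_beta by measurable
  have m_k: "k y \<in> borel_measurable lborel" "(\<lambda>x. k x y) \<in> borel_measurable lborel" for y
    using measurable_Pair2[OF m_kernel, of y] measurable_Pair1[OF m_kernel, of y] by simp_all
  have m_g: "g \<in> borel_measurable lborel" by simp
  have mass: "(\<integral>\<^sup>+x. k y x \<partial>lborel) \<le> \<Lambda>" for y
  proof -
    have "k y x = ennreal (h (x - y) * (a x - a y)\<^sup>2)" for x
      using h_even[of "x - y"] by (cases "x = y") (simp_all add: k_def power2_commute)
    then show ?thesis using \<Lambda>[of y] by simp
  qed
  have "(\<integral>\<^sup>+y. \<integral>\<^sup>+x. k y x * g x \<partial>lborel \<partial>lborel) = (\<integral>\<^sup>+x. \<integral>\<^sup>+y. k y x * g x \<partial>lborel \<partial>lborel)"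
    using m_swap by (rule lborel_pair.Fubini')
  also have "\<dots> \<le> \<Lambda> * (\<integral>\<^sup>+x. g x \<partial>lborel)"
    by (rule nn_integral_kernel_weight_le[OF m_k(2) m_g]) (simp add: k_def \<Lambda>)
  finally show "(\<integral>\<^sup>+y. \<integral>\<^sup>+x. k y x * g x \<partial>lborel \<partial>lborel) \<le> \<Lambda> * (\<integral>\<^sup>+x. g x \<partial>lborel)" .
  show "(\<integral>\<^sup>+y. \<integral>\<^sup>+x. k y x * g y \<partial>lborel \<partial>lborel) \<le> \<Lambda> * (\<integral>\<^sup>+x. g x \<partial>lborel)"
    by (rule nn_integral_kernel_weight_le[OF m_k(1) m_g mass])
qed

lemma energy_product_le:
  fixes h a u :: "real^'n \<Rightarrow> real"
  assumes [measurable]: "h \<in> borel_measurable borel" "a \<in> borel_measurable borel"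
      "u \<in> borel_measurable borel" "B \<in> sets borel"
    and h_nonneg: "\<And>z. z \<noteq> 0 \<Longrightarrow> 0 \<le> h z" and h_even: "\<And>z. z \<noteq> 0 \<Longrightarrow> h (- z) = h z"
    and a: "\<And>x. 0 \<le> a x" "\<And>x. a x \<le> 1" "\<And>x. 0 < a x \<Longrightarrow> x \<in> B"
    and \<Lambda>: "\<And>p. (\<integral>\<^sup>+q. ennreal (h (q - p) * (a q - a p)\<^sup>2) \<partial>lborel) \<le> \<Lambda>"
  shows "energy h (\<lambda>x. a x * u x)
    \<le> 2 * energy h u + 2 * \<Lambda> * (\<integral>\<^sup>+x. indicator B x * ennreal ((u x)\<^sup>2) \<partial>lborel)"
proof -
  define D where "D y x = ennreal (h (y - x) * (u y - u x)\<^sup>2)" for y x :: "real^'n"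
  define k where "k y x = ennreal (h (y - x) * (a y - a x)\<^sup>2)" for y x :: "real^'n"
  define g where "g x = indicator B x * ennreal ((u x)\<^sup>2)" for x :: "real^'n"
  have m_D: "(\<lambda>(y, x). D y x) \<in> borel_measurable (lborel \<Otimes>\<^sub>M lborel)"
    unfolding D_def case_prod_beta by measurable
  have m_x: "(\<lambda>(y, x). k y x * g x) \<in> borel_measurable (lborel \<Otimes>\<^sub>M lborel)"
    unfolding k_def g_def case_prod_beta by measurable
  have m_y: "(\<lambda>(y, x). k y x * g y) \<in> borel_measurable (lborel \<Otimes>\<^sub>M lborel)"
    unfolding k_def g_def case_prod_beta by measurable
  have m_cross: "(\<lambda>(y, x). k y x * g x + k y x * g y) \<in> borel_measurable (lborel \<Otimes>\<^sub>M lborel)"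
    using borel_measurable_add[OF m_x m_y] by (simp add: case_prod_beta')
  have m_sum: "(\<lambda>(y, x). D y x + (k y x * g x + k y x * g y)) \<in> borel_measurable (lborel \<Otimes>\<^sub>M lborel)"
    using borel_measurable_add[OF m_D m_cross] by (simp add: case_prod_beta')
  have [measurable]: "g \<in> borel_measurable borel"
    unfolding g_def[abs_def] by measurable
  have cross: "(\<integral>\<^sup>+y. \<integral>\<^sup>+x. k y x * g x \<partial>lborel \<partial>lborel) \<le> \<Lambda> * (\<integral>\<^sup>+x. g x \<partial>lborel)"
      "(\<integral>\<^sup>+y. \<integral>\<^sup>+x. k y x * g y \<partial>lborel \<partial>lborel) \<le> \<Lambda> * (\<integral>\<^sup>+x. g x \<partial>lborel)"
    unfolding k_def using kernel_cross_terms_le[of h a g] h_even \<Lambda> by auto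
  have "energy h (\<lambda>x. a x * u x)
      \<le> ennreal (1/2) * (\<integral>\<^sup>+y. \<integral>\<^sup>+x. 2 * (D y x + (k y x * g x + k y x * g y)) \<partial>lborel \<partial>lborel)"
    unfolding energy_def D_def k_def g_def using h_nonneg a
    by (intro mult_left_mono nn_integral_mono energy_integrand_product_le) auto
  also have "\<dots> = (\<integral>\<^sup>+y. \<integral>\<^sup>+x. D y x \<partial>lborel \<partial>lborel)
      + ((\<integral>\<^sup>+y. \<integral>\<^sup>+x. k y x * g x \<partial>lborel \<partial>lborel) + (\<integral>\<^sup>+y. \<integral>\<^sup>+x. k y x * g y \<partial>lborel \<partial>lborel))"
    by (simp only: iterated_nn_integral_cmult[OF m_sum] iterated_nn_integral_add[OF m_D m_cross]
        iterated_nn_integral_add[OF m_x m_y] ennreal_half_double)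
  also have "(\<integral>\<^sup>+y. \<integral>\<^sup>+x. D y x \<partial>lborel \<partial>lborel) = 2 * energy h u"
    unfolding energy_def D_def by (simp only: mult.left_commute[of 2] ennreal_half_double)
  finally show ?thesis
    using cross unfolding g_def by (simp add: mult_2 distrib_right add_mono order_trans)
qed

subsection \<open>Dyadic shells\<close>

lemma dyadic_interval:
  fixes r :: real
  assumes "1 \<le> r"
  shows "\<exists>k::nat. 2^k \<le> r \<and> r \<le> 2^(k+1)"
proof -
  have "1 \<le> nat \<lfloor>r\<rfloor>" using assms by linarith
  then obtain k :: nat where k: "2^k \<le> nat \<lfloor>r\<rfloor>" "nat \<lfloor>r\<rfloor> < 2^(k+1)"
    using ex_power_ivl1[of 2 "nat \<lfloor>r\<rfloor>"] by auto
  have floor: "real (nat \<lfloor>r\<rfloor>) \<le> r" "r < real (nat \<lfloor>r\<rfloor>) + 1"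
    using assms by linarith+
  have "real (2^k) \<le> r" using k(1) floor(1) by (meson of_nat_le_iff order_trans)
  moreover have "real (nat \<lfloor>r\<rfloor> + 1) \<le> real (2^(k+1))" using k(2) by (simp only: of_nat_le_iff)
  then have "r \<le> real (2^(k+1))" using floor(2) unfolding of_nat_add of_nat_1 by linarith
  ultimately show ?thesis by (intro exI[of _ k]) simp
qed

lemma power_powr: "0 < (b::real) \<Longrightarrow> (b ^ k) powr x = (b powr x) ^ k"
  by (induct k) (auto simp: powr_mult)

definition shell :: "real \<Rightarrow> (real^'n) set" where
  "shell a = {w. a \<le> maxnorm w \<and> maxnorm w \<le> 2 * a}"

lemma shell_sets[measurable]: "shell a \<in> sets borel"
  unfolding shell_def by measurable

lemma shell_scaleR: "0 < a \<Longrightarrow> a *\<^sub>R w \<in> shell a \<longleftrightarrow> w \<in> shell 1"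
  by (simp add: shell_def maxnorm_scale)

lemma shell_cover_outer: "1 \<le> maxnorm w \<Longrightarrow> \<exists>k::nat. w \<in> shell (2^k)"
  using dyadic_interval[of "maxnorm w"] by (auto simp: shell_def)

lemma shell_cover_inner:
  assumes "w \<noteq> 0" "maxnorm w < 1"
  shows "\<exists>k::nat. w \<in> shell ((1/2)^(k+1))"
proof -
  have r: "0 < maxnorm w" using assms(1) by (rule maxnorm_pos)
  then obtain k :: nat where "2^k \<le> 1 / maxnorm w" "1 / maxnorm w \<le> 2^(k+1)"
    using dyadic_interval[of "1 / maxnorm w"] assms(2) by auto
  then have "(1/2)^(k+1) \<le> maxnorm w" "maxnorm w \<le> 2 * (1/2)^(k+1)"
    using r by (auto simp: field_simps power_one_over)
  then show ?thesis unfolding shell_def by blast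
qed

lemma geometric_ennreal_finite:
  assumes "0 \<le> q" "q < (1::real)"
  shows "(\<Sum>k. ennreal (q ^ k)) < \<infinity>"
proof -
  have "summable (\<lambda>k. q ^ k)" using assms by (intro summable_geometric) simp
  then have "(\<Sum>k. ennreal (q ^ k)) \<noteq> top" using assms by (intro ennreal_suminf_neq_top) auto
  then show ?thesis by (simp add: less_top)
qed

lemma ennreal_term_le_suminf: "(f k :: ennreal) \<le> (\<Sum>i. f i)"
  using sum_le_suminf[of f "{k}"] by simp

lemma ennreal_affine_combine:
  fixes E :: ennreal and p q r :: real
  assumes "0 \<le> p" "0 \<le> q" "0 \<le> r"
  shows "2 * E + 2 * ennreal p * (ennreal q * E + ennreal r) = ennreal (2 + 2*p*q) * E + ennreal (2*p*r)"
proof -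
  have "2 * ennreal p * (ennreal q * E + ennreal r) = ennreal (2*p*q) * E + ennreal (2*p*r)"
    using assms by (simp add: distrib_left ennreal_mult mult.assoc)
  moreover have "ennreal (2 + 2*p*q) = 2 + ennreal (2*p*q)"
    using assms by simp
  ultimately show ?thesis by (simp add: distrib_right add.assoc)
qed

text \<open>The factor M^-\<alpha> / |B(2M)| turning the mean term into the one of the theorem.\<close>
lemma powr_scale_factor_le:
  fixes M a :: real
  assumes "0 < M"
  shows "M powr (-a) / (4 * M) ^ n \<le> 1 / M powr (real n + a)"
proof -
  have "M ^ n \<le> (4 * M) ^ n" using assms by (intro power_mono) auto
  then have "M powr a * M ^ n \<le> M powr a * (4 * M) ^ n" by (intro mult_left_mono) auto
  moreover have "M powr (real n + a) = M powr a * M ^ n"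
    using assms by (simp add: powr_add powr_realpow)
  ultimately show ?thesis
    using assms by (simp add: powr_minus divide_inverse mult.commute le_imp_inverse_le flip: inverse_mult_distrib)
qed

text \<open>The constant of the Poincare inequality on a cube of side 4M.\<close>
lemma poincare_constant:
  fixes m M a :: real
  assumes "0 < m" "0 < M"
  shows "2 / (4 * M) ^ n * (2 / (m * (4 * M) powr (- (real n + a)))) = 4 * 4 powr a / m * M powr a"
proof -
  have "2 / (m * (4 * M) powr (- (real n + a))) = 2 * (4 * M) powr (real n + a) / m"
    using assms by (simp only: powr_minus) (simp add: field_simps)
  also have "(4 * M) powr (real n + a) = (4 * M) ^ n * (4 powr a * M powr a)"
    using assms by (simp add: powr_add powr_realpow powr_mult)
  finally show ?thesis using assms by (simp add: field_simps)
qed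

subsection \<open>Homogeneous kernels\<close>

locale homogeneous_kernel =
  fixes h :: "real^'n \<Rightarrow> real" and \<alpha> :: real
  assumes alpha: "0 < \<alpha>" "\<alpha> < 2"
    and h_cont: "continuous_on (UNIV - {0}) h"
    and h_pos: "\<And>x. x \<noteq> 0 \<Longrightarrow> h x > 0"
    and h_even: "\<And>x. x \<noteq> 0 \<Longrightarrow> h (- x) = h x"
    and h_hom: "\<And>x t. x \<noteq> 0 \<Longrightarrow> t > 0 \<Longrightarrow>
                  h (t *\<^sub>R x) = t powr (- (real CARD('n) + \<alpha>)) * h x"
begin

lemma h_measurable[measurable]: "h \<in> borel_measurable borel"
  by (rule borel_measurable_continuous_countable_exceptions[of "{0}"])
     (use h_cont in \<open>auto simp: Compl_eq_Diff_UNIV\<close>)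

lemma h_continuous_annulus: "0 < r \<Longrightarrow> continuous_on {w. r \<le> maxnorm w \<and> maxnorm w \<le> R} h"
  by (rule continuous_on_subset[OF h_cont]) (auto simp: maxnorm_eq_0[symmetric])

lemma h_upper_annulus: "\<exists>H\<ge>0. \<forall>w. 1 \<le> maxnorm w \<and> maxnorm w \<le> 2 \<longrightarrow> h w \<le> H"
proof -
  have "compact (h ` {w. 1 \<le> maxnorm w \<and> maxnorm w \<le> 2})"
    using compact_maxnorm_annulus h_continuous_annulus by (intro compact_continuous_image) auto
  then obtain B where "\<forall>y\<in>h ` {w. 1 \<le> maxnorm w \<and> maxnorm w \<le> 2}. norm y \<le> B"
    using compact_imp_bounded bounded_iff by metis
  then show ?thesis by (intro exI[of _ "max B 0"]) force
qed

text \<open>By compactness of the unit sphere and homogeneity, h z \<ge> m R^-(d+\<alpha>) whenever |z| \<le> R.\<close>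
lemma h_lower_bound:
  "\<exists>m>0. \<forall>z R. z \<noteq> 0 \<longrightarrow> maxnorm z \<le> R \<longrightarrow> m * R powr (- (real CARD('n) + \<alpha>)) \<le> h z"
proof -
  let ?S = "{w::real^'n. 1 \<le> maxnorm w \<and> maxnorm w \<le> 1}"
  have "maxnorm ((\<chi> i. 1) :: real^'n) = 1"
    using maxnorm_ge[of "(\<chi> i. 1) :: real^'n"] by (intro antisym) (auto simp: maxnorm_le_iff)
  then have "?S \<noteq> {}" by force
  then obtain w0 where w0: "w0 \<in> ?S" "\<forall>w\<in>?S. h w0 \<le> h w"
    using continuous_attains_inf[OF compact_maxnorm_annulus _ h_continuous_annulus] by fastforce
  have "w0 \<noteq> 0" using w0 by auto
  then have m: "0 < h w0" by (rule h_pos)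
  have "h w0 * R powr (- (real CARD('n) + \<alpha>)) \<le> h z" if z: "z \<noteq> 0" "maxnorm z \<le> R" for z R
  proof -
    let ?r = "maxnorm z"
    have r: "0 < ?r" using z maxnorm_pos by blast
    have unit: "(1/?r) *\<^sub>R z \<in> ?S" using r by (simp add: maxnorm_scale)
    then have "(1/?r) *\<^sub>R z \<noteq> 0" by auto
    then have "h z = ?r powr (- (real CARD('n) + \<alpha>)) * h ((1/?r) *\<^sub>R z)"
      using h_hom[of "(1/?r) *\<^sub>R z" ?r] r by simp
    moreover have "R powr (- (real CARD('n) + \<alpha>)) \<le> ?r powr (- (real CARD('n) + \<alpha>))"
      using r z alpha by (intro powr_mono2') auto
    moreover have "h w0 \<le> h ((1/?r) *\<^sub>R z)" using w0 unit by blast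
    ultimately show ?thesis using m by (simp add: mult.commute mult_mono)
  qed
  then show ?thesis using m by blast
qed

text \<open>Change of variables w = c v against the kernel: the Jacobian c^d and the homogeneity
  c^-(d+\<alpha>) of h combine to c^-\<alpha>.  The weight must vanish at the origin, where h is arbitrary.\<close>
lemma nn_integral_kernel_scale:
  fixes f :: "real^'n \<Rightarrow> ennreal"
  assumes [measurable]: "f \<in> borel_measurable borel" and "f 0 = 0" and c: "0 < c"
  shows "(\<integral>\<^sup>+w. f w * ennreal (h w) \<partial>lborel)
    = ennreal (c powr (-\<alpha>)) * (\<integral>\<^sup>+v. f (c *\<^sub>R v) * ennreal (h v) \<partial>lborel)"
proof -
  have "(\<integral>\<^sup>+w. f w * ennreal (h w) \<partial>lborel)
      = ennreal (c ^ CARD('n)) * (\<integral>\<^sup>+v. f (c *\<^sub>R v) * ennreal (h (c *\<^sub>R v)) \<partial>lborel)"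
    using c by (intro nn_integral_scale) auto
  also have "(\<lambda>v. f (c *\<^sub>R v) * ennreal (h (c *\<^sub>R v)))
      = (\<lambda>v. ennreal (c powr (- (real CARD('n) + \<alpha>))) * (f (c *\<^sub>R v) * ennreal (h v)))"
  proof
    fix v :: "real^'n"
    show "f (c *\<^sub>R v) * ennreal (h (c *\<^sub>R v))
        = ennreal (c powr (- (real CARD('n) + \<alpha>))) * (f (c *\<^sub>R v) * ennreal (h v))"
      using assms(2) c h_hom[of v c] h_pos[of v]
      by (cases "v = 0") (simp_all add: ennreal_mult mult_ac)
  qed
  also have "ennreal (c ^ CARD('n)) * (\<integral>\<^sup>+v. ennreal (c powr (- (real CARD('n) + \<alpha>))) * (f (c *\<^sub>R v) * ennreal (h v)) \<partial>lborel)
      = ennreal (c ^ CARD('n) * c powr (- (real CARD('n) + \<alpha>))) * (\<integral>\<^sup>+v. f (c *\<^sub>R v) * ennreal (h v) \<partial>lborel)"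
    using c by (simp add: nn_integral_cmult ennreal_mult mult.assoc)
  also have "c ^ CARD('n) * c powr (- (real CARD('n) + \<alpha>)) = c powr (-\<alpha>)"
    using c by (simp add: powr_realpow[symmetric] powr_add[symmetric])
  finally show ?thesis .
qed

definition shell_mass :: "real \<Rightarrow> ennreal" where
  "shell_mass a = (\<integral>\<^sup>+w. indicator (shell a) w * ennreal (h w) \<partial>lborel)"

definition kernel_moment :: ennreal where
  "kernel_moment = (\<integral>\<^sup>+w. ennreal ((min 1 (maxnorm w))\<^sup>2) * ennreal (h w) \<partial>lborel)"

lemma shell_mass_scale:
  assumes "0 < a"
  shows "shell_mass a = ennreal (a powr (-\<alpha>)) * shell_mass 1"
proof -
  have "0 \<notin> shell a" using assms by (simp add: shell_def)
  then show ?thesis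
    unfolding shell_mass_def using assms
    by (subst nn_integral_kernel_scale[of _ a]) (simp_all add: shell_scaleR indicator_def)
qed

lemma shell_mass_finite: "shell_mass 1 < \<infinity>"
proof -
  obtain H where H: "H \<ge> 0" "\<forall>w. 1 \<le> maxnorm w \<and> maxnorm w \<le> 2 \<longrightarrow> h w \<le> H"
    using h_upper_annulus by blast
  have "shell_mass 1 \<le> (\<integral>\<^sup>+w. ennreal H * indicator (cube 2 :: (real^'n) set) w \<partial>lborel)"
    unfolding shell_mass_def using H by (intro nn_integral_mono) (auto simp: indicator_def shell_def cube_def)
  also have "\<dots> = ennreal H * ennreal (4 ^ CARD('n))"
    by (simp add: nn_integral_cmult_indicator emeasure_cube)
  also have "\<dots> < \<infinity>"
    by (simp add: ennreal_mult_less_top)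
  finally show ?thesis .
qed

text \<open>The shell masses decay geometrically at infinity (ratio 2^-\<alpha>), and at 0 their growth
  (ratio 2^\<alpha>) is beaten by the weight |w|^2 (ratio 1/4) since \<alpha> < 2.\<close>
lemma outer_shells_finite: "(\<Sum>k. shell_mass (2^k)) < \<infinity>"
proof -
  have "shell_mass (2^k) = ennreal ((2 powr (-\<alpha>))^k) * shell_mass 1" for k :: nat
    using shell_mass_scale[of "2^k"] by (simp add: power_powr)
  moreover have "(\<Sum>k. ennreal ((2 powr (-\<alpha>))^k)) < \<infinity>"
    using alpha by (intro geometric_ennreal_finite) (auto simp: powr_minus inverse_less_1_iff)
  ultimately show ?thesis
    using shell_mass_finite by (simp add: ennreal_suminf_multc ennreal_mult_less_top)
qed

lemma inner_shells_finite: "(\<Sum>k. ennreal ((1/4)^k) * shell_mass ((1/2)^(k+1))) < \<infinity>"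
proof -
  have half: "(1/2::real) powr (-\<alpha>) = 2 powr \<alpha>"
    by (simp add: powr_minus_divide powr_divide)
  have "ennreal ((1/4)^k) * shell_mass ((1/2)^(k+1))
      = ennreal (2 powr \<alpha>) * ennreal ((2 powr \<alpha> / 4)^k) * shell_mass 1" for k :: nat
  proof -
    have "((1/2::real)^(k+1)) powr (-\<alpha>) = (2 powr \<alpha>)^(k+1)"
      using power_powr[of "1/2" "k+1" "-\<alpha>"] half by simp
    then have "(1/4::real)^k * ((1/2)^(k+1)) powr (-\<alpha>) = 2 powr \<alpha> * (2 powr \<alpha> / 4)^k"
      by (simp add: power_divide power_one_over)
    moreover have "shell_mass ((1/2)^(k+1)) = ennreal (((1/2)^(k+1)) powr (-\<alpha>)) * shell_mass 1"
      by (rule shell_mass_scale) simp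
    ultimately show ?thesis
      by (simp add: mult.assoc[symmetric] ennreal_mult[symmetric] del: power_Suc)
  qed
  moreover have "2 powr \<alpha> < 4" using powr_less_mono[of \<alpha> 2 2] alpha by simp
  then have "(\<Sum>k. ennreal ((2 powr \<alpha> / 4)^k)) < \<infinity>"
    by (intro geometric_ennreal_finite) auto
  ultimately show ?thesis
    using shell_mass_finite by (simp add: ennreal_suminf_multc ennreal_mult_less_top)
qed

text \<open>On the shell of radius 2^k the weight min(1,|w|)^2 is 1, on the shell of radius
  (1/2)^(k+1) it is at most (1/4)^k.\<close>
lemma moment_weight_le_shells:
  "ennreal ((min 1 (maxnorm w))\<^sup>2) * ennreal (h w)
    \<le> (\<Sum>k. indicator (shell (2^k)) w * ennreal (h w))
      + (\<Sum>k. ennreal ((1/4)^k) * (indicator (shell ((1/2)^(k+1))) w * ennreal (h w)))"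
proof (cases "w = 0")
  case False
  show ?thesis
  proof (cases "1 \<le> maxnorm w")
    case True
    then obtain k :: nat where "w \<in> shell (2^k)" using shell_cover_outer by blast
    then have "ennreal ((min 1 (maxnorm w))\<^sup>2) * ennreal (h w) = indicator (shell (2^k)) w * ennreal (h w)"
      using True by simp
    also have "\<dots> \<le> (\<Sum>k. indicator (shell (2^k)) w * ennreal (h w))"
      by (rule ennreal_term_le_suminf)
    finally show ?thesis by (simp add: add_increasing2)
  next
    case outer: False
    then obtain k :: nat where k: "w \<in> shell ((1/2)^(k+1))"
      using shell_cover_inner False by fastforce
    then have "(maxnorm w)\<^sup>2 \<le> ((1/2)^k)\<^sup>2"
      using maxnorm_nonneg[of w] by (intro power_mono) (auto simp: shell_def)
    also have "((1/2::real)^k)\<^sup>2 = (1/4)^k"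
      by (simp add: power2_eq_square flip: power_mult_distrib)
    finally have "(min 1 (maxnorm w))\<^sup>2 \<le> (1/4)^k"
      using outer by (simp add: min_def)
    then have "ennreal ((min 1 (maxnorm w))\<^sup>2) * ennreal (h w)
        \<le> ennreal ((1/4)^k) * (indicator (shell ((1/2)^(k+1))) w * ennreal (h w))"
      using k by (simp add: mult_right_mono)
    also have "\<dots> \<le> (\<Sum>k. ennreal ((1/4)^k) * (indicator (shell ((1/2)^(k+1))) w * ennreal (h w)))"
      by (rule ennreal_term_le_suminf)
    finally show ?thesis by (simp add: add_increasing)
  qed
qed simp

lemma kernel_moment_finite: "kernel_moment < \<infinity>"
proof -
  have "kernel_moment \<le> (\<integral>\<^sup>+w. (\<Sum>k. indicator (shell (2^k)) w * ennreal (h w))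
      + (\<Sum>k. ennreal ((1/4)^k) * (indicator (shell ((1/2)^(k+1))) w * ennreal (h w))) \<partial>lborel)"
    unfolding kernel_moment_def by (intro nn_integral_mono moment_weight_le_shells)
  also have "\<dots> = (\<integral>\<^sup>+w. (\<Sum>k. indicator (shell (2^k)) w * ennreal (h w)) \<partial>lborel)
      + (\<integral>\<^sup>+w. (\<Sum>k. ennreal ((1/4)^k) * (indicator (shell ((1/2)^(k+1))) w * ennreal (h w))) \<partial>lborel)"
    by (rule nn_integral_add) measurable
  also have "\<dots> = (\<Sum>k. shell_mass (2^k)) + (\<Sum>k. ennreal ((1/4)^k) * shell_mass ((1/2)^(k+1)))"
    unfolding shell_mass_def by (subst (1 2) nn_integral_suminf) (simp_all add: nn_integral_cmult)
  also have "\<dots> < \<infinity>"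
    using outer_shells_finite inner_shells_finite by simp
  finally show ?thesis .
qed

lemma cutoff_kernel_mass:
  assumes M: "0 < M"
  shows "(\<integral>\<^sup>+q. ennreal (h (q - p) * (cutoff ((1/M) *\<^sub>R q) - cutoff ((1/M) *\<^sub>R p))\<^sup>2) \<partial>lborel)
    \<le> ennreal (M powr (-\<alpha>)) * kernel_moment"
proof -
  let ?a = "\<lambda>q. cutoff ((1/M) *\<^sub>R q)"
  have "(\<integral>\<^sup>+q. ennreal (h (q - p) * (?a q - ?a p)\<^sup>2) \<partial>lborel)
      = (\<integral>\<^sup>+w. ennreal (h ((p + w) - p) * (?a (p + w) - ?a p)\<^sup>2) \<partial>lborel)"
    by (rule nn_integral_shift) simp
  also have "\<dots> \<le> (\<integral>\<^sup>+w. ennreal ((min 1 (maxnorm ((1/M) *\<^sub>R w)))\<^sup>2) * ennreal (h w) \<partial>lborel)"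
  proof (intro nn_integral_mono)
    fix w :: "real^'n"
    have "\<bar>?a (p + w) - ?a p\<bar> \<le> min 1 (maxnorm ((1/M) *\<^sub>R (p + w) - (1/M) *\<^sub>R p))"
      by (rule cutoff_lipschitz)
    also have "(1/M) *\<^sub>R (p + w) - (1/M) *\<^sub>R p = (1/M) *\<^sub>R w"
      by (simp add: algebra_simps)
    finally have "\<bar>?a (p + w) - ?a p\<bar>\<^sup>2 \<le> (min 1 (maxnorm ((1/M) *\<^sub>R w)))\<^sup>2"
      by (intro power_mono) auto
    then have "(?a (p + w) - ?a p)\<^sup>2 \<le> (min 1 (maxnorm ((1/M) *\<^sub>R w)))\<^sup>2"
      by simp
    then show "ennreal (h ((p + w) - p) * (?a (p + w) - ?a p)\<^sup>2)
        \<le> ennreal ((min 1 (maxnorm ((1/M) *\<^sub>R w)))\<^sup>2) * ennreal (h w)"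
      using h_pos[of w] by (cases "w = 0") (auto simp: ennreal_mult'[symmetric] mult.commute mult_left_mono)
  qed
  also have "\<dots> = ennreal (M powr (-\<alpha>)) * kernel_moment"
    unfolding kernel_moment_def using M by (subst nn_integral_kernel_scale[of _ M]) auto
  finally show ?thesis .
qed

text \<open>Poincare inequality on the cube B(2M) in terms of the energy, with a constant that
  scales like M^\<alpha>: by the lower bound on h, the kernel is at least m (4M)^-(d+\<alpha>) on
  the differences of points of B(2M).\<close>
lemma cube_poincare:
  assumes m: "0 < m" "\<And>z R. z \<noteq> 0 \<Longrightarrow> maxnorm z \<le> R \<Longrightarrow> m * R powr (- (real CARD('n) + \<alpha>)) \<le> h z"
    and u: "locally_integrable u" and M: "0 < M"
  shows "(\<integral>\<^sup>+x. indicator (cube (2 * M)) x * ennreal ((u x)\<^sup>2) \<partial>lborel)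
    \<le> ennreal (4 * 4 powr \<alpha> / m * M powr \<alpha>) * energy h u
      + ennreal (2 * (set_lebesgue_integral lborel (cube (2 * M)) u)\<^sup>2 / (4 * M) ^ CARD('n))"
proof -
  define \<mu> where "\<mu> = (4 * M) ^ CARD('n)"
  define \<eta> where "\<eta> = m * (4 * M) powr (- (real CARD('n) + \<alpha>))"
  have \<mu>: "0 < \<mu>" "emeasure lborel (cube (2 * M) :: (real^'n) set) = ennreal \<mu>"
    using M emeasure_cube[of "2 * M"] by (simp_all add: \<mu>_def)
  have \<eta>: "0 < \<eta>" using m M by (simp add: \<eta>_def)
  have u_meas[measurable]: "u \<in> borel_measurable borel" using u by (rule locally_integrable_measurable)
  have ui: "set_integrable lborel (cube (2 * M)) u"
    using u unfolding locally_integrable_def by (simp add: cube_cbox)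
  have "\<eta> \<le> h (y - x)" if "x \<in> cube (2 * M)" "y \<in> cube (2 * M)" "x \<noteq> y" for x y
    using m(2)[of "y - x" "4 * M"] cube_diameter[OF that(1,2)] that(3) by (simp add: \<eta>_def)
  then have osc: "(\<integral>\<^sup>+y. \<integral>\<^sup>+x. indicator (cube (2 * M)) y * (indicator (cube (2 * M)) x * ennreal ((u y - u x)\<^sup>2)) \<partial>lborel \<partial>lborel)
      \<le> ennreal (2/\<eta>) * energy h u"
    using \<eta> by (intro oscillation_le_energy) auto
  have "(\<integral>\<^sup>+x. indicator (cube (2 * M)) x * ennreal ((u x)\<^sup>2) \<partial>lborel)
      \<le> ennreal (2/\<mu>) * (\<integral>\<^sup>+y. \<integral>\<^sup>+x. indicator (cube (2 * M)) y * (indicator (cube (2 * M)) x * ennreal ((u y - u x)\<^sup>2)) \<partial>lborel \<partial>lborel)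
        + ennreal (2 * (set_lebesgue_integral lborel (cube (2 * M)) u)\<^sup>2 / \<mu>)"
    by (rule poincare_with_mean[OF cube_sets \<mu>(2) \<mu>(1) ui u_meas])
  also have "\<dots> \<le> ennreal (2/\<mu>) * (ennreal (2/\<eta>) * energy h u)
        + ennreal (2 * (set_lebesgue_integral lborel (cube (2 * M)) u)\<^sup>2 / \<mu>)"
    using osc by (intro add_mono mult_left_mono) auto
  also have "ennreal (2/\<mu>) * (ennreal (2/\<eta>) * energy h u) = ennreal (2/\<mu> * (2/\<eta>)) * energy h u"
    using \<mu> \<eta> by (simp add: mult.assoc[symmetric] ennreal_mult[symmetric])
  also have "2/\<mu> * (2/\<eta>) = 4 * 4 powr \<alpha> / m * M powr \<alpha>"
    unfolding \<mu>_def \<eta>_def by (rule poincare_constant[OF m(1) M])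
  finally show ?thesis unfolding \<mu>_def .
qed

lemma truncation_bound:
  fixes u :: "real^'n \<Rightarrow> real" and M C :: real
  defines "S \<equiv> set_lebesgue_integral lborel (cube (2 * M)) u" and "k \<equiv> enn2real kernel_moment"
  assumes u: "locally_integrable u" and M: "0 < M" and C: "0 \<le> C"
    and poincare: "(\<integral>\<^sup>+x. indicator (cube (2 * M)) x * ennreal ((u x)\<^sup>2) \<partial>lborel)
      \<le> ennreal (C * M powr \<alpha>) * energy h u + ennreal (2 * S\<^sup>2 / (4 * M) ^ CARD('n))"
  shows "energy h (\<lambda>x. cutoff ((1/M) *\<^sub>R x) * u x)
    \<le> ennreal (2 + 2*k*C) * energy h u + ennreal (4*k / M powr (real CARD('n) + \<alpha>) * S\<^sup>2)"
proof -
  let ?E = "energy h u"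
  have k: "0 \<le> k" "kernel_moment = ennreal k"
    using kernel_moment_finite by (auto simp: k_def less_top)
  define p where "p = M powr (-\<alpha>) * k"
  have p: "0 \<le> p" using k by (simp add: p_def)
  have [measurable]: "u \<in> borel_measurable borel" using u by (rule locally_integrable_measurable)
  have "energy h (\<lambda>x. cutoff ((1/M) *\<^sub>R x) * u x)
      \<le> 2 * ?E + 2 * ennreal p * (\<integral>\<^sup>+x. indicator (cube (2 * M)) x * ennreal ((u x)\<^sup>2) \<partial>lborel)"
    using k cutoff_kernel_mass[OF M] scaled_cutoff_support[OF M] cutoff_bounds h_pos h_even
    by (intro energy_product_le) (auto simp: p_def ennreal_mult less_imp_le)
  also have "\<dots> \<le> 2 * ?E + 2 * ennreal p * (ennreal (C * M powr \<alpha>) * ?E + ennreal (2 * S\<^sup>2 / (4 * M) ^ CARD('n)))"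
    using poincare by (intro add_left_mono mult_left_mono) auto
  also have "\<dots> = ennreal (2 + 2*p*(C * M powr \<alpha>)) * ?E + ennreal (2*p*(2 * S\<^sup>2 / (4 * M) ^ CARD('n)))"
    using p C M by (intro ennreal_affine_combine) auto
  also have "2*p*(C * M powr \<alpha>) = 2*k*C"
    using M by (simp add: p_def powr_minus field_simps)
  also have "2*p*(2 * S\<^sup>2 / (4 * M) ^ CARD('n)) \<le> 4*k / M powr (real CARD('n) + \<alpha>) * S\<^sup>2"
  proof -
    have "2*p*(2 * S\<^sup>2 / (4 * M) ^ CARD('n)) = 4*k*S\<^sup>2 * (M powr (-\<alpha>) / (4 * M) ^ CARD('n))"
      by (simp add: p_def)
    also have "\<dots> \<le> 4*k*S\<^sup>2 * (1 / M powr (real CARD('n) + \<alpha>))"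
      using k M by (intro mult_left_mono powr_scale_factor_le) auto
    finally show ?thesis by simp
  qed
  then have "ennreal (2*p*(2 * S\<^sup>2 / (4 * M) ^ CARD('n))) \<le> ennreal (4*k / M powr (real CARD('n) + \<alpha>) * S\<^sup>2)"
    by (rule ennreal_leI)
  finally show ?thesis by (simp add: add_left_mono)
qed

end

theorem lemma11:
  fixes h :: "real^'n \<Rightarrow> real" and \<alpha> :: real
  assumes alpha: "0 < \<alpha>" "\<alpha> < 2"
    and h_cont: "continuous_on (UNIV - {0}) h"
    and h_pos: "\<And>x. x \<noteq> 0 \<Longrightarrow> h x > 0"
    and h_even: "\<And>x. x \<noteq> 0 \<Longrightarrow> h (- x) = h x"
    and h_hom: "\<And>x t. x \<noteq> 0 \<Longrightarrow> t > 0 \<Longrightarrow>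
                  h (t *\<^sub>R x) = t powr (- (real CARD('n) + \<alpha>)) * h x"
  shows "\<exists>c::real. c > 0 \<and>
    (\<forall>u M. locally_integrable u \<longrightarrow> energy h u < \<infinity> \<longrightarrow> M > 0 \<longrightarrow>
       (let uM = (\<lambda>x. cutoff ((1 / M) *\<^sub>R x) * u x) in
          energy h uM < \<infinity> \<and>
          energy h uM \<le> ennreal c * energy h u
            + ennreal (c / M powr (real CARD('n) + \<alpha>) *
                       (set_lebesgue_integral lborel (cube (2 * M)) u)\<^sup>2)))"
proof -
  interpret homogeneous_kernel h \<alpha>
    using assms by unfold_locales
  obtain m where m: "0 < m"
    "\<And>z R. z \<noteq> 0 \<Longrightarrow> maxnorm z \<le> R \<Longrightarrow> m * R powr (- (real CARD('n) + \<alpha>)) \<le> h z"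
    using h_lower_bound by blast
  define C where "C = 4 * 4 powr \<alpha> / m"
  have C: "0 < C" using m by (simp add: C_def)
  define k where "k = enn2real kernel_moment"
  define c where "c = 2 + 2*k*C + 4*k"
  have k: "0 \<le> k" by (simp add: k_def)
  show ?thesis
  proof (intro exI[of _ c] conjI allI impI)
    show "c > 0" using k C by (simp add: c_def add_pos_nonneg)
    fix u :: "real^'n \<Rightarrow> real" and M :: real
    assume u: "locally_integrable u" and fin: "energy h u < \<infinity>" and M: "M > 0"
    let ?S = "set_lebesgue_integral lborel (cube (2 * M)) u"
    have "energy h (\<lambda>x. cutoff ((1/M) *\<^sub>R x) * u x)
        \<le> ennreal (2 + 2*k*C) * energy h u + ennreal (4*k / M powr (real CARD('n) + \<alpha>) * ?S\<^sup>2)"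
      unfolding k_def C_def using truncation_bound[OF u M _ cube_poincare[OF m u M]] m by simp
    also have "\<dots> \<le> ennreal c * energy h u + ennreal (c / M powr (real CARD('n) + \<alpha>) * ?S\<^sup>2)"
      using k C by (intro add_mono mult_right_mono ennreal_leI divide_right_mono) (auto simp: c_def)
    finally have bound: "energy h (\<lambda>x. cutoff ((1/M) *\<^sub>R x) * u x)
        \<le> ennreal c * energy h u + ennreal (c / M powr (real CARD('n) + \<alpha>) * ?S\<^sup>2)" .
    moreover have "ennreal c * energy h u + ennreal (c / M powr (real CARD('n) + \<alpha>) * ?S\<^sup>2) < \<infinity>"
      using fin by (simp add: ennreal_mult_less_top less_top)
    ultimately show "let uM = (\<lambda>x. cutoff ((1 / M) *\<^sub>R x) * u x) in
        energy h uM < \<infinity> \<and> energy h uM \<le> ennreal c * energy h u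
          + ennreal (c / M powr (real CARD('n) + \<alpha>) * ?S\<^sup>2)"
      unfolding Let_def by (blast intro: le_less_trans)
  qed
qed

end
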